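(* Let $(S,\sqcup,\cap)$ be an ado-semilattice and $a,b,d\in S$. If $a$ and $b$ have an upper bound in $(S,\leq)$ and $d\lesssim a$ and $d\lesssim b$, then $d\lesssim a\cap b$.
   Context: An o-semilattice is an algebra $(L,\cap,\sqcup)$ such that $(L,\cap)$ is a semilattice and, with $x\leq y$ iff $x=x\cap y$, for all $x,y,z$: (i) $x\leq x\sqcup y$; (ii) $(x\cap y)\sqcup(y\cap z)\leq y$; (iii) $x\sqcup y\leq x\sqcup(y\cap(x\sqcup y))$; (iv) $x\cap z\leq(x\cap y)\sqcup z$. It is distributive if $(a\cap d)\sqcup((b\cap d)\cap(c\cap d))=((a\cap d)\sqcup(b\cap d))\cap((a\cap d)\sqcup(c\cap d))$ for all $a,b,c,d$. An ado-semilattice is a distributive o-semilattice in which $\sqcup$ is associative. Here $\leq$ is the semilattice order ($x\leq y$ iff $x=x\cap y$) and $x\lesssim y$ means $y\sqcup x=y$. *)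

theory Defs
  imports Main
begin

definition sl_le :: "('a \<Rightarrow> 'a \<Rightarrow> 'a) \<Rightarrow> 'a \<Rightarrow> 'a \<Rightarrow> bool" where
  "sl_le m x y \<longleftrightarrow> x = m x y"

definition lesssim :: "('a \<Rightarrow> 'a \<Rightarrow> 'a) \<Rightarrow> 'a \<Rightarrow> 'a \<Rightarrow> bool" where
  "lesssim j x y \<longleftrightarrow> j y x = y"

definition semilattice_op :: "('a \<Rightarrow> 'a \<Rightarrow> 'a) \<Rightarrow> bool" where
  "semilattice_op m \<longleftrightarrow>
     (\<forall>x y z. m (m x y) z = m x (m y z)) \<and>
     (\<forall>x y. m x y = m y x) \<and>
     (\<forall>x. m x x = x)"

definition o_semilattice :: "('a \<Rightarrow> 'a \<Rightarrow> 'a) \<Rightarrow> ('a \<Rightarrow> 'a \<Rightarrow> 'a) \<Rightarrow> bool" where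
  "o_semilattice m j \<longleftrightarrow> semilattice_op m \<and>
     (\<forall>x y. sl_le m x (j x y)) \<and>
     (\<forall>x y z. sl_le m (j (m x y) (m y z)) y) \<and>
     (\<forall>x y. sl_le m (j x y) (j x (m y (j x y)))) \<and>
     (\<forall>x y z. sl_le m (m x z) (j (m x y) z))"

definition distributive_os :: "('a \<Rightarrow> 'a \<Rightarrow> 'a) \<Rightarrow> ('a \<Rightarrow> 'a \<Rightarrow> 'a) \<Rightarrow> bool" where
  "distributive_os m j \<longleftrightarrow> o_semilattice m j \<and>
     (\<forall>a b c d. j (m a d) (m (m b d) (m c d)) = m (j (m a d) (m b d)) (j (m a d) (m c d)))"

definition ado_semilattice :: "('a \<Rightarrow> 'a \<Rightarrow> 'a) \<Rightarrow> ('a \<Rightarrow> 'a \<Rightarrow> 'a) \<Rightarrow> bool" where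
  "ado_semilattice m j \<longleftrightarrow> distributive_os m j \<and> (\<forall>x y z. j (j x y) z = j x (j y z))"

end

theory Submission
  imports Defs
begin

text \<open>Below a common upper bound \<open>s\<close>, the operation \<open>\<squnion>\<close> is the least upper bound, it is
commutative, and \<open>x \<lesssim> y\<close> coincides with \<open>x \<le> y\<close>. Put \<open>c = a \<inter> b\<close>, \<open>w = a \<squnion> b\<close> and
\<open>t = c \<squnion> d\<close>; associativity gives \<open>a \<squnion> t = a\<close> and \<open>b \<squnion> t = b\<close>. To compare \<open>t\<close> with \<open>a\<close> and
\<open>b\<close> one needs a common bound, and \<open>t \<squnion> w\<close> is one as soon as \<open>w \<le> t \<squnion> w\<close>. That inequality is
where axiom (iii) and distributivity enter: \<open>r = w \<inter> (t \<squnion> w)\<close> satisfies \<open>a \<squnion> r = b \<squnion> r = w\<close>,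
hence \<open>r = r \<squnion> c = (r \<squnion> a) \<inter> (r \<squnion> b) = w\<close>. Then \<open>t \<le> a\<close>, \<open>t \<le> b\<close>, so \<open>t \<le> c \<le> t\<close>.\<close>

locale o_semilattice_struct =
  fixes meet join :: "'a \<Rightarrow> 'a \<Rightarrow> 'a"
  assumes o_semilattice: "o_semilattice meet join"
begin

abbreviation below :: "'a \<Rightarrow> 'a \<Rightarrow> bool"  (infix \<open>\<preceq>\<close> 50)
  where "x \<preceq> y \<equiv> sl_le meet x y"

abbreviation lesssim_join :: "'a \<Rightarrow> 'a \<Rightarrow> bool"  (infix \<open>\<lesssim>\<close> 50)
  where "x \<lesssim> y \<equiv> lesssim join x y"

sublocale semilattice_order meet "(\<preceq>)" "\<lambda>x y. x \<preceq> y \<and> x \<noteq> y"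
  using o_semilattice
  by unfold_locales (auto simp: o_semilattice_def semilattice_op_def sl_le_def)

lemma le_join: "x \<preceq> join x y"
  using o_semilattice by (simp add: o_semilattice_def)

lemma join_meet_meet_le: "join (meet x y) (meet y z) \<preceq> y"
  using o_semilattice by (simp add: o_semilattice_def)

lemma join_le_join_meet_join: "join x y \<preceq> join x (meet y (join x y))"
  using o_semilattice by (simp add: o_semilattice_def)

lemma meet_le_join_meet: "meet x y \<preceq> join (meet x z) y"
  using o_semilattice by (simp add: o_semilattice_def)

lemma join_least:
  assumes "x \<preceq> s" and "y \<preceq> s"
  shows "join x y \<preceq> s"
  using join_meet_meet_le [of x s y] assms by (simp add: absorb1 absorb2)

lemma le_join_bounded:
  assumes "x \<preceq> s" and "y \<preceq> s"
  shows "y \<preceq> join x y"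
  using meet_le_join_meet [of s y x] assms by (simp add: absorb2)

lemma join_commute_bounded:
  assumes "x \<preceq> s" and "y \<preceq> s"
  shows "join x y = join y x"
proof (rule antisym)
  show "join x y \<preceq> join y x"
    by (rule join_least) (use le_join_bounded [OF assms(2,1)] le_join in auto)
  show "join y x \<preceq> join x y"
    by (rule join_least) (use le_join_bounded [OF assms] le_join in auto)
qed

lemma le_imp_lesssim: "x \<preceq> y \<Longrightarrow> x \<lesssim> y"
  unfolding lesssim_def by (intro antisym join_least le_join refl)

lemma le_imp_join_eq: "x \<preceq> y \<Longrightarrow> join x y = y"
  by (intro antisym join_least le_join_bounded [of x y] refl)

lemma lesssim_imp_le_bounded:
  assumes "x \<preceq> s" and "y \<preceq> s" and "x \<lesssim> y"
  shows "x \<preceq> y"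
  using meet_le_join_meet [of s x y] assms by (simp add: absorb2 lesssim_def)

end

locale ado_semilattice_struct =
  fixes meet join :: "'a \<Rightarrow> 'a \<Rightarrow> 'a"
  assumes ado_semilattice: "ado_semilattice meet join"
begin

sublocale o_semilattice_struct meet join
  using ado_semilattice
  by unfold_locales (simp add: ado_semilattice_def distributive_os_def)

lemma join_assoc: "join (join x y) z = join x (join y z)"
  using ado_semilattice by (simp add: ado_semilattice_def)

lemma join_meet_distrib_bounded:
  assumes "x \<preceq> s" and "y \<preceq> s" and "z \<preceq> s"
  shows "join x (meet y z) = meet (join x y) (join x z)"
proof -
  have "join (meet x s) (meet (meet y s) (meet z s))
      = meet (join (meet x s) (meet y s)) (join (meet x s) (meet z s))"
    using ado_semilattice by (simp add: ado_semilattice_def distributive_os_def)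
  with assms show ?thesis
    by (simp add: absorb1)
qed

lemma lesssim_join_lower:
  assumes "c \<preceq> a" and "d \<lesssim> a"
  shows "join c d \<lesssim> a"
  using assms le_imp_lesssim [OF assms(1)]
  by (simp add: lesssim_def join_assoc [symmetric])

lemma join_meet_join_eq:
  assumes "t \<lesssim> a" and "a \<preceq> w"
  shows "join a (meet w (join t w)) = w"
proof (rule antisym)
  have "join a (join t w) = w"
    using assms by (simp add: lesssim_def join_assoc [symmetric] le_imp_join_eq)
  then show "w \<preceq> join a (meet w (join t w))"
    using join_le_join_meet_join [of a "join t w"] by (simp add: commute)
  show "join a (meet w (join t w)) \<preceq> w"
    using assms(2) by (intro join_least) auto
qed

lemma join_le_join_join_of_lesssim:
  assumes "a \<preceq> u" and "b \<preceq> u"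
    and "t \<lesssim> a" and "t \<lesssim> b" and "meet a b \<preceq> t"
  shows "join a b \<preceq> join t (join a b)"
proof -
  define w where "w = join a b"
  define r where "r = meet w (join t w)"
  have "a \<preceq> w" "b \<preceq> w" "r \<preceq> w"
    using assms(1,2) le_join le_join_bounded by (auto simp: w_def r_def)
  have "join r a = w" "join r b = w"
    using join_meet_join_eq [OF assms(3) \<open>a \<preceq> w\<close>] join_meet_join_eq [OF assms(4) \<open>b \<preceq> w\<close>]
      join_commute_bounded [OF \<open>r \<preceq> w\<close>] \<open>a \<preceq> w\<close> \<open>b \<preceq> w\<close>
    by (simp_all add: r_def)
  then have "join r (meet a b) = w"
    using join_meet_distrib_bounded [OF \<open>r \<preceq> w\<close> \<open>a \<preceq> w\<close> \<open>b \<preceq> w\<close>] by simp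
  moreover have "meet a b \<preceq> r"
    using \<open>a \<preceq> w\<close> assms(5) le_join [of t w] by (auto simp: r_def intro: coboundedI1 trans)
  then have "join r (meet a b) = r"
    using le_imp_lesssim by (simp add: lesssim_def)
  ultimately have "r = w"
    by simp
  then show ?thesis
    by (simp add: r_def w_def order_iff)
qed

lemma lesssim_meet:
  assumes "a \<preceq> u" and "b \<preceq> u" and "d \<lesssim> a" and "d \<lesssim> b"
  shows "d \<lesssim> meet a b"
proof -
  define t where "t = join (meet a b) d"
  have "t \<lesssim> a" "t \<lesssim> b"
    using assms(3,4) by (simp_all add: t_def lesssim_join_lower)
  have "meet a b \<preceq> t"
    by (simp add: t_def le_join)
  define v where "v = join t (join a b)"
  have "join a b \<preceq> v"
    using join_le_join_join_of_lesssim [OF assms(1,2) \<open>t \<lesssim> a\<close> \<open>t \<lesssim> b\<close> \<open>meet a b \<preceq> t\<close>]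
    by (simp add: v_def)
  then have "a \<preceq> v" "b \<preceq> v"
    using le_join [of a b] le_join_bounded [OF assms(1,2)] by (auto intro: trans)
  moreover have "t \<preceq> v"
    by (simp add: v_def le_join)
  ultimately have "t \<preceq> a" "t \<preceq> b"
    using lesssim_imp_le_bounded \<open>t \<lesssim> a\<close> \<open>t \<lesssim> b\<close> by blast+
  then have "t = meet a b"
    using \<open>meet a b \<preceq> t\<close> by (simp add: antisym)
  then show ?thesis
    by (simp add: lesssim_def t_def)
qed

end

theorem lemma3p5:
  fixes meet join :: "'a \<Rightarrow> 'a \<Rightarrow> 'a" and a b d :: 'a
  assumes "ado_semilattice meet join"
    and "\<exists>u. sl_le meet a u \<and> sl_le meet b u"
    and "lesssim join d a" and "lesssim join d b"
  shows "lesssim join d (meet a b)"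
proof -
  interpret ado_semilattice_struct meet join
    by (rule ado_semilattice_struct.intro) (fact assms(1))
  from assms(2) obtain u where "sl_le meet a u" and "sl_le meet b u"
    by blast
  then show ?thesis
    using lesssim_meet assms(3,4) by blast
qed

end
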